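(* Let $G$ be a connected graph in $\mathcal{C}$ and $C$ an induced $C_5$ in $G$. If $X\neq\emptyset$, then $|R|\le 2$ or $X$ is a clique cutset of $G$.
   Context: $\mathcal{C}=\mathrm{Free}(\text{claw}, 4K_1, \text{5-wheel}, C_5\text{-twin}, P_5\text{-twin}, K_5-e)$, where $\mathrm{Free}(L)$ is the class of graphs with no induced subgraph isomorphic to a member of $L$; the claw is $K_{1,3}$; $4K_1$ is the edgeless graph on 4 vertices; the 5-wheel is $C_5$ plus a vertex adjacent to all five cycle vertices; the $C_5$-twin is $C_5$ plus a new vertex adjacent to one cycle vertex $v$ and both cycle-neighbours of $v$; the $P_5$-twin is a path $p_1p_2p_3p_4p_5$ plus a new vertex adjacent to exactly $p_2,p_3,p_4$; $K_5-e$ is $K_5$ minus one edge. Given an induced cycle $C$ of length 5 with vertices $0,\dots,4$ in cyclic order (indices taken mod 5): $R$ is the set of vertices outside $C$ with no neighbour in $C$; $X_j$ is the set of vertices outside $C$ whose neighbourhood in $C$ is exactly $\{j,j+1\}$; $Y_j$ is the set of vertices outside $C$ whose neighbourhood in $C$ is exactly $\{j,j+1,j+2,j+3\}$; $X=\bigcup_j X_j$, $Y=\bigcup_j Y_j$. A clique cutset of $G$ is a set $S$ of vertices inducing a clique such that $G-S$ is disconnected. *)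

theory Defs
  imports Main
begin

definition graph :: "'a set \<Rightarrow> ('a \<Rightarrow> 'a \<Rightarrow> bool) \<Rightarrow> bool" where
  "graph V E \<longleftrightarrow> finite V \<and> (\<forall>x y. E x y \<longrightarrow> x \<in> V \<and> y \<in> V)
     \<and> (\<forall>x y. E x y \<longrightarrow> E y x) \<and> (\<forall>x. \<not> E x x)"

inductive reach :: "('a \<Rightarrow> 'a \<Rightarrow> bool) \<Rightarrow> 'a set \<Rightarrow> 'a \<Rightarrow> 'a \<Rightarrow> bool"
  for E S where
  refl: "x \<in> S \<Longrightarrow> reach E S x x"
| step: "reach E S x y \<Longrightarrow> E y z \<Longrightarrow> z \<in> S \<Longrightarrow> reach E S x z"

definition connected_on :: "'a set \<Rightarrow> ('a \<Rightarrow> 'a \<Rightarrow> bool) \<Rightarrow> bool" where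
  "connected_on S E \<longleftrightarrow> S \<noteq> {} \<and> (\<forall>x\<in>S. \<forall>y\<in>S. reach E S x y)"

definition clique :: "'a set \<Rightarrow> ('a \<Rightarrow> 'a \<Rightarrow> bool) \<Rightarrow> bool" where
  "clique S E \<longleftrightarrow> (\<forall>x\<in>S. \<forall>y\<in>S. x \<noteq> y \<longrightarrow> E x y)"

definition clique_cutset :: "'a set \<Rightarrow> ('a \<Rightarrow> 'a \<Rightarrow> bool) \<Rightarrow> 'a set \<Rightarrow> bool" where
  "clique_cutset V E S \<longleftrightarrow> S \<subseteq> V \<and> clique S E \<and>
     (\<exists>x\<in>V - S. \<exists>y\<in>V - S. \<not> reach E (V - S) x y)"

definition has_induced :: "'a set \<Rightarrow> ('a \<Rightarrow> 'a \<Rightarrow> bool) \<Rightarrow> nat \<Rightarrow> (nat \<Rightarrow> nat \<Rightarrow> bool) \<Rightarrow> bool" where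
  "has_induced V E n F \<longleftrightarrow> (\<exists>f. inj_on f {0..<n} \<and> f ` {0..<n} \<subseteq> V \<and>
     (\<forall>i<n. \<forall>j<n. E (f i) (f j) \<longleftrightarrow> F i j))"

definition edges_of :: "(nat \<times> nat) list \<Rightarrow> nat \<Rightarrow> nat \<Rightarrow> bool" where
  "edges_of L i j \<longleftrightarrow> (i, j) \<in> set L \<or> (j, i) \<in> set L"

definition C5_edges :: "(nat \<times> nat) list" where
  "C5_edges = [(0,1),(1,2),(2,3),(3,4),(4,0)]"

definition claw :: "nat \<Rightarrow> nat \<Rightarrow> bool" where
  "claw = edges_of [(0,1),(0,2),(0,3)]"

definition fourK1 :: "nat \<Rightarrow> nat \<Rightarrow> bool" where
  "fourK1 = edges_of []"

definition wheel5 :: "nat \<Rightarrow> nat \<Rightarrow> bool" where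
  "wheel5 = edges_of (C5_edges @ [(5,0),(5,1),(5,2),(5,3),(5,4)])"

definition C5_twin :: "nat \<Rightarrow> nat \<Rightarrow> bool" where
  "C5_twin = edges_of (C5_edges @ [(5,4),(5,0),(5,1)])"

definition P5_twin :: "nat \<Rightarrow> nat \<Rightarrow> bool" where
  "P5_twin = edges_of [(0,1),(1,2),(2,3),(3,4),(5,1),(5,2),(5,3)]"

definition K5_minus_e :: "nat \<Rightarrow> nat \<Rightarrow> bool" where
  "K5_minus_e = edges_of [(0,2),(0,3),(0,4),(1,2),(1,3),(1,4),(2,3),(2,4),(3,4)]"

definition in_class_C :: "'a set \<Rightarrow> ('a \<Rightarrow> 'a \<Rightarrow> bool) \<Rightarrow> bool" where
  "in_class_C V E \<longleftrightarrow> graph V E \<and>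
     \<not> has_induced V E 4 claw \<and> \<not> has_induced V E 4 fourK1 \<and>
     \<not> has_induced V E 6 wheel5 \<and> \<not> has_induced V E 6 C5_twin \<and>
     \<not> has_induced V E 6 P5_twin \<and> \<not> has_induced V E 5 K5_minus_e"

text \<open>c : nat \<Rightarrow> 'a lists the vertices c 0, ..., c 4 of an induced C5 in cyclic order
  (indices mod 5).\<close>
definition induced_C5 :: "'a set \<Rightarrow> ('a \<Rightarrow> 'a \<Rightarrow> bool) \<Rightarrow> (nat \<Rightarrow> 'a) \<Rightarrow> bool" where
  "induced_C5 V E c \<longleftrightarrow> inj_on c {0..<5} \<and> c ` {0..<5} \<subseteq> V \<and>
     (\<forall>i<5. \<forall>j<5. E (c i) (c j) \<longleftrightarrow> (j = (i + 1) mod 5 \<or> i = (j + 1) mod 5))"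

definition nbrs_C :: "('a \<Rightarrow> 'a \<Rightarrow> bool) \<Rightarrow> (nat \<Rightarrow> 'a) \<Rightarrow> 'a \<Rightarrow> nat set" where
  "nbrs_C E c v = {i. i < 5 \<and> E v (c i)}"

definition R_set :: "'a set \<Rightarrow> ('a \<Rightarrow> 'a \<Rightarrow> bool) \<Rightarrow> (nat \<Rightarrow> 'a) \<Rightarrow> 'a set" where
  "R_set V E c = {v \<in> V - c ` {0..<5}. nbrs_C E c v = {}}"

definition X_j :: "'a set \<Rightarrow> ('a \<Rightarrow> 'a \<Rightarrow> bool) \<Rightarrow> (nat \<Rightarrow> 'a) \<Rightarrow> nat \<Rightarrow> 'a set" where
  "X_j V E c j = {v \<in> V - c ` {0..<5}. nbrs_C E c v = {j mod 5, (j + 1) mod 5}}"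

definition X_set :: "'a set \<Rightarrow> ('a \<Rightarrow> 'a \<Rightarrow> bool) \<Rightarrow> (nat \<Rightarrow> 'a) \<Rightarrow> 'a set" where
  "X_set V E c = (\<Union>j<5. X_j V E c j)"

end

theory Submission
  imports Defs
begin

text \<open>Write C = c 0 \<dots> c 4. A vertex of R nonadjacent to some x \<in> X_j would form a 4K1 with x,
  c (j + 2) and c (j + 4); two nonadjacent vertices of R would form one with c 0 and c 2. So R is a
  clique complete to X, and once |R| \<ge> 3 two nonadjacent vertices of X would complete a K5 - e.
  Claw-freeness forces every neighbour z \<notin> X of R outside C to see either nothing of C or two
  consecutive cycle vertices: a claw at z excludes neighbours two apart on C, a claw at c i excludes
  isolated ones. Hence z \<in> R, and the component of R in G - X never reaches C.\<close>

lemma graph_sym: "graph V E \<Longrightarrow> E x y \<Longrightarrow> E y x"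
  by (auto simp: graph_def)

lemma graph_irrefl: "graph V E \<Longrightarrow> \<not> E x x"
  by (auto simp: graph_def)

lemma graph_adj_neq: "graph V E \<Longrightarrow> E x y \<Longrightarrow> x \<noteq> y"
  using graph_irrefl by metis

lemma less_4_cases: "(i::nat) < 4 \<longleftrightarrow> i = 0 \<or> i = 1 \<or> i = 2 \<or> i = 3"
  by auto

lemma less_5_cases: "(i::nat) < 5 \<longleftrightarrow> i = 0 \<or> i = 1 \<or> i = 2 \<or> i = 3 \<or> i = 4"
  by auto

lemma less_5E:
  assumes "(i::nat) < 5" "i = 0 \<Longrightarrow> P" "i = 1 \<Longrightarrow> P" "i = 2 \<Longrightarrow> P" "i = 3 \<Longrightarrow> P" "i = 4 \<Longrightarrow> P"
  shows P
  using assms by (auto simp: less_5_cases)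

lemma has_induced_listI:
  assumes "length vs = n" "distinct vs" "set vs \<subseteq> V"
    and "\<And>i j. i < n \<Longrightarrow> j < n \<Longrightarrow> E (vs ! i) (vs ! j) \<longleftrightarrow> F i j"
  shows "has_induced V E n F"
  unfolding has_induced_def
proof (intro exI conjI)
  show "inj_on ((!) vs) {0..<n}"
    using assms(1,2) by (auto simp: inj_on_def nth_eq_iff_index_eq)
  show "(!) vs ` {0..<n} \<subseteq> V"
    using assms(1,3) by auto
qed (use assms(4) in auto)

lemma claw_free_nbrs_adjacent:
  assumes "\<not> has_induced V E 4 claw" "graph V E" "a \<in> V" "b \<in> V" "c \<in> V" "d \<in> V"
    and "E a b" "E a c" "E a d" "b \<noteq> c" "b \<noteq> d" "c \<noteq> d"
  shows "E b c \<or> E b d \<or> E c d"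
proof (rule ccontr)
  assume nonadj: "\<not> (E b c \<or> E b d \<or> E c d)"
  have sym: "E x y \<longleftrightarrow> E y x" for x y
    using graph_sym[OF assms(2)] by blast
  have "E ([a, b, c, d] ! i) ([a, b, c, d] ! j) \<longleftrightarrow> claw i j" if "i < 4" "j < 4" for i j
    using that graph_irrefl[OF assms(2)] assms(7-9) nonadj unfolding less_4_cases
    by (elim disjE) (simp_all add: sym claw_def edges_of_def)
  moreover have "distinct [a, b, c, d]"
    using assms(7-12) graph_adj_neq[OF assms(2)] by auto
  ultimately have "has_induced V E 4 claw"
    using assms(3-6) by (intro has_induced_listI[of "[a, b, c, d]"]) auto
  with assms(1) show False ..
qed

lemma fourK1_free_adjacent_pair:
  assumes "\<not> has_induced V E 4 fourK1" "graph V E" "a \<in> V" "b \<in> V" "c \<in> V" "d \<in> V"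
    and "distinct [a, b, c, d]"
  shows "E a b \<or> E a c \<or> E a d \<or> E b c \<or> E b d \<or> E c d"
proof (rule ccontr)
  assume nonadj: "\<not> (E a b \<or> E a c \<or> E a d \<or> E b c \<or> E b d \<or> E c d)"
  have sym: "E x y \<longleftrightarrow> E y x" for x y
    using graph_sym[OF assms(2)] by blast
  have "E ([a, b, c, d] ! i) ([a, b, c, d] ! j) \<longleftrightarrow> fourK1 i j" if "i < 4" "j < 4" for i j
    using that graph_irrefl[OF assms(2)] nonadj unfolding less_4_cases
    by (elim disjE) (simp_all add: sym fourK1_def edges_of_def)
  then have "has_induced V E 4 fourK1"
    using assms(3-7) by (intro has_induced_listI[of "[a, b, c, d]"]) auto
  with assms(1) show False ..
qed

lemma K5e_free_adjacent:
  assumes "\<not> has_induced V E 5 K5_minus_e" "graph V E"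
    and "a \<in> V" "b \<in> V" "c \<in> V" "d \<in> V" "e \<in> V" "a \<noteq> b"
    and "E a c" "E a d" "E a e" "E b c" "E b d" "E b e" "E c d" "E c e" "E d e"
  shows "E a b"
proof (rule ccontr)
  assume nonadj: "\<not> E a b"
  have sym: "E x y \<longleftrightarrow> E y x" for x y
    using graph_sym[OF assms(2)] by blast
  have "E ([a, b, c, d, e] ! i) ([a, b, c, d, e] ! j) \<longleftrightarrow> K5_minus_e i j"
    if "i < 5" "j < 5" for i j
    using that graph_irrefl[OF assms(2)] assms(9-17) nonadj unfolding less_5_cases
    by (elim disjE) (simp_all add: sym K5_minus_e_def edges_of_def)
  moreover have "distinct [a, b, c, d, e]"
    using assms(8-17) graph_adj_neq[OF assms(2)] by auto
  ultimately have "has_induced V E 5 K5_minus_e"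
    using assms(3-7) by (intro has_induced_listI[of "[a, b, c, d, e]"]) auto
  with assms(1) show False ..
qed

lemma reach_closed:
  assumes "reach E S x y" "x \<in> T"
    and "\<And>u w. u \<in> T \<Longrightarrow> E u w \<Longrightarrow> w \<in> S \<Longrightarrow> w \<in> T"
  shows "y \<in> T"
  using assms by (induction rule: reach.induct) auto

lemma consecutive_pair_mod_5:
  fixes N :: "nat set"
  assumes "N \<subseteq> {..<5}" "N \<noteq> {}"
    and no_gap: "\<And>i. i \<in> N \<Longrightarrow> (i + 2) mod 5 \<notin> N"
    and consec: "\<And>i. i \<in> N \<Longrightarrow> (i + 1) mod 5 \<in> N \<or> (i + 4) mod 5 \<in> N"
  shows "\<exists>j<5. N = {j, (j + 1) mod 5}"
proof -
  obtain j where j: "j < 5" "j \<in> N" "(j + 1) mod 5 \<in> N"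
  proof -
    obtain i where i: "i \<in> N"
      using assms(2) by blast
    then have "i < 5"
      using assms(1) by auto
    then have "((i + 4) mod 5 + 1) mod 5 = i"
      by (auto elim!: less_5E)
    with i consec[OF i] that[of i] that[of "(i + 4) mod 5"] \<open>i < 5\<close> show thesis
      by fastforce
  qed
  have "k = j \<or> k = (j + 1) mod 5" if k: "k \<in> N" for k
  proof -
    have "k < 5"
      using k assms(1) by auto
    moreover have "k \<noteq> (j + 2) mod 5" "k \<noteq> ((j + 1) mod 5 + 2) mod 5"
      "(k + 2) mod 5 \<noteq> (j + 1) mod 5"
      using no_gap[OF j(2)] no_gap[OF j(3)] no_gap[OF k] k j(3) by metis+
    ultimately show ?thesis
      using j(1) by (auto elim!: less_5E)
  qed
  with j show ?thesis
    by blast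
qed

locale C5_in_class_C =
  fixes V :: "'a set" and E :: "'a \<Rightarrow> 'a \<Rightarrow> bool" and c :: "nat \<Rightarrow> 'a"
  assumes in_class: "in_class_C V E" and induced_C5: "induced_C5 V E c"
begin

abbreviation "R \<equiv> R_set V E c"
abbreviation "X \<equiv> X_set V E c"

lemma graph: "graph V E"
  and claw_free: "\<not> has_induced V E 4 claw"
  and fourK1_free: "\<not> has_induced V E 4 fourK1"
  and K5e_free: "\<not> has_induced V E 5 K5_minus_e"
  using in_class by (auto simp: in_class_C_def)

lemma cycle_in_V: "i < 5 \<Longrightarrow> c i \<in> V"
  using induced_C5 by (auto simp: induced_C5_def)

lemma cycle_eq_iff: "i < 5 \<Longrightarrow> j < 5 \<Longrightarrow> c i = c j \<longleftrightarrow> i = j"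
  using induced_C5 by (auto simp: induced_C5_def inj_on_def)

lemma cycle_adj_iff:
  "i < 5 \<Longrightarrow> j < 5 \<Longrightarrow> E (c i) (c j) \<longleftrightarrow> j = (i + 1) mod 5 \<or> j = (i + 4) mod 5"
  using induced_C5 unfolding induced_C5_def by (auto elim!: less_5E)

lemma R_memD:
  assumes "r \<in> R"
  shows "r \<in> V" "i < 5 \<Longrightarrow> r \<noteq> c i" "i < 5 \<Longrightarrow> \<not> E r (c i)"
  using assms by (auto simp: R_set_def nbrs_C_def)

lemma X_memE:
  assumes "x \<in> X"
  obtains j where "j < 5" "x \<in> V" "\<And>k. k < 5 \<Longrightarrow> x \<noteq> c k"
    "\<And>k. k < 5 \<Longrightarrow> E x (c k) \<longleftrightarrow> k = j \<or> k = (j + 1) mod 5"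
proof -
  obtain j where "j < 5" "x \<in> X_j V E c j"
    using assms by (auto simp: X_set_def)
  then show thesis
    by (intro that[of j]) (auto simp: X_j_def nbrs_C_def set_eq_iff)
qed

lemma X_subset: "X \<subseteq> V"
  by (auto simp: X_set_def X_j_def)

lemma X_complete_to_R:
  assumes x: "x \<in> X" and r: "r \<in> R"
  shows "E x r"
proof -
  obtain j where j: "j < 5" "x \<in> V" "\<And>k. k < 5 \<Longrightarrow> x \<noteq> c k"
    and nbrs_x: "\<And>k. k < 5 \<Longrightarrow> E x (c k) \<longleftrightarrow> k = j \<or> k = (j + 1) mod 5"
    using X_memE[OF x] by blast
  define a b where "a = (j + 2) mod 5" and "b = (j + 4) mod 5"
  have idx: "a < 5" "b < 5" "a \<noteq> b" "a \<noteq> j" "a \<noteq> (j + 1) mod 5" "b \<noteq> j"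
    "b \<noteq> (j + 1) mod 5" "b \<noteq> (a + 1) mod 5" "b \<noteq> (a + 4) mod 5"
    unfolding a_def b_def using j(1) by (auto elim!: less_5E dest: dvd_imp_le)
  then have nonadj: "\<not> E (c a) (c b)" "\<not> E x (c a)" "\<not> E x (c b)"
    "\<not> E r (c a)" "\<not> E r (c b)"
    using nbrs_x cycle_adj_iff[of a b] R_memD(3)[OF r] by auto
  have "x \<noteq> r"
    using j(1) nbrs_x[of j] R_memD(3)[OF r] by auto
  with idx j(3)[of a] j(3)[of b] R_memD(2)[OF r idx(1)] R_memD(2)[OF r idx(2)]
  have "distinct [x, r, c a, c b]"
    by (simp add: cycle_eq_iff)
  from fourK1_free_adjacent_pair[OF fourK1_free graph j(2) R_memD(1)[OF r]
      cycle_in_V[OF idx(1)] cycle_in_V[OF idx(2)] this]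
  show ?thesis
    using nonadj by blast
qed

lemma R_clique: "clique R E"
  unfolding clique_def
proof (intro ballI impI)
  fix r r' assume r: "r \<in> R" and r': "r' \<in> R" and "r \<noteq> r'"
  with R_memD(2)[OF r] R_memD(2)[OF r'] have "distinct [r, r', c 0, c 2]"
    by (simp add: cycle_eq_iff)
  from fourK1_free_adjacent_pair[OF fourK1_free graph R_memD(1)[OF r] R_memD(1)[OF r']
      cycle_in_V cycle_in_V this]
  show "E r r'"
    using R_memD(3)[OF r] R_memD(3)[OF r'] cycle_adj_iff[of 0 2] by simp
qed

lemma X_clique:
  assumes "2 < card R"
  shows "clique X E"
  unfolding clique_def
proof (intro ballI impI)
  obtain r1 r2 r3 where r: "r1 \<in> R" "r2 \<in> R" "r3 \<in> R" "distinct [r1, r2, r3]"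
    using assms by (auto simp: numeral_3_eq_3 card_le_Suc_iff Suc_le_eq[symmetric])
  have rr: "E r1 r2" "E r1 r3" "E r2 r3"
    using r R_clique by (auto simp: clique_def)
  fix x x' assume x: "x \<in> X" and x': "x' \<in> X" and "x \<noteq> x'"
  then have "x \<in> V" "x' \<in> V"
    using X_subset by auto
  with \<open>x \<noteq> x'\<close> r rr R_memD(1) X_complete_to_R[OF x] X_complete_to_R[OF x']
  show "E x x'"
    by (intro K5e_free_adjacent[OF K5e_free graph, of x x' r1 r2 r3]) simp_all
qed

lemma R_nbr_not_two_apart:
  assumes y: "y \<in> R" and "E y z" "z \<in> V" "i < 5" "E z (c i)"
  shows "\<not> E z (c ((i + 2) mod 5))"
proof
  assume "E z (c ((i + 2) mod 5))"
  moreover have "(i + 2) mod 5 < 5" "i \<noteq> (i + 2) mod 5" "\<not> E (c i) (c ((i + 2) mod 5))"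
    using assms(4) cycle_adj_iff[of i "(i + 2) mod 5"] by (auto elim!: less_5E)
  moreover have "E z y"
    using graph_sym[OF graph assms(2)] .
  ultimately show False
    using claw_free_nbrs_adjacent[OF claw_free graph assms(3) R_memD(1)[OF y]
        cycle_in_V[OF assms(4)] cycle_in_V[of "(i + 2) mod 5"]]
      assms(4,5) R_memD(2,3)[OF y] cycle_eq_iff by metis
qed

lemma cycle_nbr_consecutive:
  assumes "z \<in> V" "\<And>k. k < 5 \<Longrightarrow> z \<noteq> c k" "i < 5" "E z (c i)"
  shows "E z (c ((i + 1) mod 5)) \<or> E z (c ((i + 4) mod 5))"
proof -
  have "(i + 1) mod 5 < 5" "(i + 4) mod 5 < 5" "(i + 1) mod 5 \<noteq> (i + 4) mod 5"
    "E (c i) (c ((i + 1) mod 5))" "E (c i) (c ((i + 4) mod 5))"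
    "\<not> E (c ((i + 1) mod 5)) (c ((i + 4) mod 5))"
    using assms(3) cycle_adj_iff by (auto elim!: less_5E)
  moreover have "E (c i) z"
    using graph_sym[OF graph assms(4)] .
  ultimately show ?thesis
    using claw_free_nbrs_adjacent[OF claw_free graph cycle_in_V[OF assms(3)] assms(1)
        cycle_in_V[of "(i + 1) mod 5"] cycle_in_V[of "(i + 4) mod 5"]]
      assms(2) cycle_eq_iff graph_sym[OF graph] by metis
qed

lemma R_closed_outside_X:
  assumes y: "y \<in> R" and "E y z" "z \<in> V" "z \<notin> X"
  shows "z \<in> R"
proof -
  have z_off_C: "z \<noteq> c k" if "k < 5" for k
    using R_memD(3)[OF y that] assms(2) by auto
  then have z_notin_C: "z \<notin> c ` {0..<5}"
    by (metis atLeastLessThan_iff imageE)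
  have "nbrs_C E c z = {}"
  proof (rule ccontr)
    assume "nbrs_C E c z \<noteq> {}"
    moreover have "nbrs_C E c z \<subseteq> {..<5}"
      by (auto simp: nbrs_C_def)
    moreover have "(i + 2) mod 5 \<notin> nbrs_C E c z" if "i \<in> nbrs_C E c z" for i
      using that R_nbr_not_two_apart[OF assms(1-3)] by (simp add: nbrs_C_def)
    moreover have "(i + 1) mod 5 \<in> nbrs_C E c z \<or> (i + 4) mod 5 \<in> nbrs_C E c z"
      if "i \<in> nbrs_C E c z" for i
      using that cycle_nbr_consecutive[OF assms(3) z_off_C] by (simp add: nbrs_C_def)
    ultimately obtain j where "j < 5" "nbrs_C E c z = {j, (j + 1) mod 5}"
      using consecutive_pair_mod_5 by meson
    then have "z \<in> X_j V E c j"
      using assms(3) z_notin_C by (simp add: X_j_def)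
    with \<open>j < 5\<close> assms(4) show False
      by (auto simp: X_set_def)
  qed
  with assms(3) z_notin_C show ?thesis
    by (simp add: R_set_def)
qed

lemma R_disjoint_X: "R \<inter> X = {}"
proof -
  have "x \<notin> R" if "x \<in> X" for x
  proof -
    obtain j where "j < 5" "E x (c j)"
      using X_memE[OF \<open>x \<in> X\<close>] by metis
    then show ?thesis
      using R_memD(3) by blast
  qed
  then show ?thesis
    by blast
qed

lemma cycle_notin_X: "i < 5 \<Longrightarrow> c i \<notin> X"
  using X_memE by metis

lemma R_not_reach_cycle:
  assumes "r \<in> R"
  shows "\<not> reach E (V - X) r (c 0)"
proof
  assume "reach E (V - X) r (c 0)"
  then have "c 0 \<in> R"
    using assms by (rule reach_closed) (blast intro: R_closed_outside_X)
  then show False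
    using R_memD(2)[of "c 0" 0] by simp
qed

end

theorem claim16:
  fixes V :: "'a set" and E :: "'a \<Rightarrow> 'a \<Rightarrow> bool" and c :: "nat \<Rightarrow> 'a"
  assumes "in_class_C V E"
    and "connected_on V E"
    and "induced_C5 V E c"
    and "X_set V E c \<noteq> {}"
  shows "card (R_set V E c) \<le> 2 \<or> clique_cutset V E (X_set V E c)"
proof (cases "card (R_set V E c) \<le> 2")
  case False
  interpret C5_in_class_C V E c
    using assms(1,3) by unfold_locales
  obtain r where r: "r \<in> R"
    using False by fastforce
  have "r \<in> V - X" "c 0 \<in> V - X"
    using r R_memD(1) R_disjoint_X cycle_in_V[of 0] cycle_notin_X[of 0] by auto
  moreover have "clique X E"
    using False X_clique by simp
  ultimately have "clique_cutset V E X"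
    unfolding clique_cutset_def using X_subset R_not_reach_cycle[OF r] by blast
  then show ?thesis ..
qed simp

end
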